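(* Let $A$ be the graph on $9$ vertices consisting of a central triangle with vertices $p_0,p_1,p_2$ together with three further triangles $\Delta_0,\Delta_1,\Delta_2$, where $\Delta_i$ shares exactly the vertex $p_i$ with the central triangle and the triangles $\Delta_0,\Delta_1,\Delta_2$ are pairwise vertex-disjoint. Let $G=A\,\square\,A$ be the cartesian product of $A$ with itself (the "2-hive"). Then there exists a set $S\subseteq V(G)$ that is a non-isolated perfect dominating set of $G$, i.e. every vertex of $G$ not in $S$ either has exactly one neighbour in $S$, or has exactly two neighbours in $S$ and these two neighbours are the end-vertices of an edge of $G$. Moreover, the connected components of the subgraph of $G$ induced by $S$ are: four copies of $K_2$ (single edges), one $4$-cycle $K_2\square K_2$, and one triangular prism $K_3\square K_2$.
   Context: A tersquare is the graph $K_3\square K_3$ (cartesian product of two triangles, vertex set $F_3\times F_3$ with $F_3=\{0,1,2\}$); its triangles are the six subgraphs obtained by fixing one coordinate. The paper's "2-hive" $[[\emptyset]]$ is the union of $16$ tersquares: a central tersquare, six "subcentral" tersquares each glued to the central one along exactly one of its six triangles, and nine "corner" tersquares, each sharing one triangle with a subcentral tersquare glued along an $x$-triangle, one triangle with a subcentral tersquare glued along a $y$-triangle, and exactly one vertex with the central tersquare. As a graph this union is exactly $A\square A$ as described in the claim (the $16$ tersquares being the products $T\times T'$ with $T,T'$ among the four triangles of $A$). Here $K_2$ is a single edge, and $\square$ denotes the cartesian product of graphs. *)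

theory Defs
  imports Main
begin

text \<open>A (simple, undirected) graph is given by a vertex set V and a symmetric,
irreflexive adjacency predicate E (only its restriction to V matters).\<close>

definition cart_prod_adj ::
  "('a \<Rightarrow> 'a \<Rightarrow> bool) \<Rightarrow> ('b \<Rightarrow> 'b \<Rightarrow> bool) \<Rightarrow> ('a \<times> 'b) \<Rightarrow> ('a \<times> 'b) \<Rightarrow> bool" where
  "cart_prod_adj E1 E2 x y \<longleftrightarrow>
     (fst x = fst y \<and> E2 (snd x) (snd y)) \<or> (snd x = snd y \<and> E1 (fst x) (fst y))"

definition K_V :: "nat \<Rightarrow> nat set" where "K_V n = {0..<n}"
definition K_adj :: "nat \<Rightarrow> nat \<Rightarrow> bool" where "K_adj u v \<longleftrightarrow> u \<noteq> v"

text \<open>The graph A on 9 vertices: central triangle {0,1,2}; triangle Delta_0 = {0,3,4},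
Delta_1 = {1,5,6}, Delta_2 = {2,7,8}.\<close>
definition A_V :: "nat set" where "A_V = {0..<9}"
definition A_triangles :: "nat set set" where
  "A_triangles = {{0,1,2}, {0,3,4}, {1,5,6}, {2,7,8}}"
definition A_adj :: "nat \<Rightarrow> nat \<Rightarrow> bool" where
  "A_adj u v \<longleftrightarrow> u \<noteq> v \<and> (\<exists>T\<in>A_triangles. u \<in> T \<and> v \<in> T)"

definition hive_V :: "(nat \<times> nat) set" where "hive_V = A_V \<times> A_V"
definition hive_adj :: "(nat \<times> nat) \<Rightarrow> (nat \<times> nat) \<Rightarrow> bool" where
  "hive_adj = cart_prod_adj A_adj A_adj"

definition nbrs_in :: "('a \<Rightarrow> 'a \<Rightarrow> bool) \<Rightarrow> 'a set \<Rightarrow> 'a \<Rightarrow> 'a set" where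
  "nbrs_in E S x = {y \<in> S. E x y}"

definition nonisolated_perfect_dominating ::
  "'a set \<Rightarrow> ('a \<Rightarrow> 'a \<Rightarrow> bool) \<Rightarrow> 'a set \<Rightarrow> bool" where
  "nonisolated_perfect_dominating V E S \<longleftrightarrow>
     S \<subseteq> V \<and>
     (\<forall>x\<in>S. \<exists>y\<in>S. E x y) \<and>
     (\<forall>x\<in>V - S. card (nbrs_in E S x) = 1 \<or>
        (card (nbrs_in E S x) = 2 \<and> (\<exists>a b. nbrs_in E S x = {a, b} \<and> E a b)))"

definition reach_in :: "('a \<Rightarrow> 'a \<Rightarrow> bool) \<Rightarrow> 'a set \<Rightarrow> 'a \<Rightarrow> 'a \<Rightarrow> bool" where
  "reach_in E S = (\<lambda>x y. x \<in> S \<and> y \<in> S \<and> E x y)\<^sup>*\<^sup>*"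

definition components_of :: "('a \<Rightarrow> 'a \<Rightarrow> bool) \<Rightarrow> 'a set \<Rightarrow> 'a set set" where
  "components_of E S = (\<lambda>x. {y \<in> S. reach_in E S x y}) ` S"

definition graph_iso :: "'a set \<Rightarrow> ('a \<Rightarrow> 'a \<Rightarrow> bool) \<Rightarrow> 'b set \<Rightarrow> ('b \<Rightarrow> 'b \<Rightarrow> bool) \<Rightarrow> bool" where
  "graph_iso V1 E1 V2 E2 \<longleftrightarrow>
     (\<exists>f. bij_betw f V1 V2 \<and> (\<forall>x\<in>V1. \<forall>y\<in>V1. E1 x y \<longleftrightarrow> E2 (f x) (f y)))"

end

theory Submission
  imports Defs
begin

text \<open>The dominating set is the union of six blocks V \<times> W, where V and W lie in triangles
  of A: {0} \<times> {7,8}, {3,4} \<times> {1}, {5,6} \<times> {2}, {7,8} \<times> {2}, {1,2} \<times> {5,6} and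
  {0,1,2} \<times> {3,4}. A product of two cliques K_m and K_n of A is connected, and the hive induces
  on it exactly K_m \<box> K_n; so once one checks that no edge of the hive joins two different
  blocks, the blocks are the components and have the required shapes (K_2 \<box> K_1 = K_2, K_2 \<box> K_2,
  K_3 \<box> K_2). The remaining conditions are finite checks on the 81 vertices.\<close>

definition complete_on :: "'a set \<Rightarrow> ('a \<Rightarrow> 'a \<Rightarrow> bool) \<Rightarrow> bool" where
  "complete_on V E \<longleftrightarrow> (\<forall>x\<in>V. \<forall>y\<in>V. E x y \<longleftrightarrow> x \<noteq> y)"

lemma graph_iso_K_V:
  assumes "finite V" "complete_on V E"
  shows "graph_iso V E (K_V (card V)) K_adj"
proof -
  obtain f where f: "bij_betw f V {0..<card V}"
    using ex_bij_betw_finite_nat[OF assms(1)] by blast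
  then have "\<forall>x\<in>V. \<forall>y\<in>V. E x y \<longleftrightarrow> K_adj (f x) (f y)"
    using assms(2) by (auto simp: complete_on_def K_adj_def bij_betw_def inj_on_def)
  with f show ?thesis
    unfolding graph_iso_def K_V_def by blast
qed

lemma graph_iso_cart_prod:
  assumes "graph_iso V1 E1 W1 F1" "graph_iso V2 E2 W2 F2"
  shows "graph_iso (V1 \<times> V2) (cart_prod_adj E1 E2) (W1 \<times> W2) (cart_prod_adj F1 F2)"
proof -
  obtain f where f: "bij_betw f V1 W1" "\<forall>x\<in>V1. \<forall>y\<in>V1. E1 x y \<longleftrightarrow> F1 (f x) (f y)"
    using assms(1) unfolding graph_iso_def by blast
  obtain g where g: "bij_betw g V2 W2" "\<forall>x\<in>V2. \<forall>y\<in>V2. E2 x y \<longleftrightarrow> F2 (g x) (g y)"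
    using assms(2) unfolding graph_iso_def by blast
  have "\<forall>x\<in>V1 \<times> V2. \<forall>y\<in>V1 \<times> V2.
      cart_prod_adj E1 E2 x y \<longleftrightarrow> cart_prod_adj F1 F2 (map_prod f g x) (map_prod f g y)"
    using f g unfolding cart_prod_adj_def bij_betw_def inj_on_def by auto
  with bij_betw_map_prod[OF f(1) g(1)] show ?thesis
    unfolding graph_iso_def by blast
qed

lemma complete_on_singleton_Times:
  "\<not> E1 a a \<Longrightarrow> complete_on W E2 \<Longrightarrow> complete_on ({a} \<times> W) (cart_prod_adj E1 E2)"
  by (auto simp: complete_on_def cart_prod_adj_def)

lemma complete_on_Times_singleton:
  "complete_on V E1 \<Longrightarrow> \<not> E2 b b \<Longrightarrow> complete_on (V \<times> {b}) (cart_prod_adj E1 E2)"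
  by (auto simp: complete_on_def cart_prod_adj_def)

lemma reach_in_closed:
  assumes "reach_in E S x y" "x \<in> P"
    and "\<And>u v. u \<in> P \<Longrightarrow> v \<in> S \<Longrightarrow> E u v \<Longrightarrow> v \<in> P"
  shows "y \<in> P"
  using assms(1,2) unfolding reach_in_def
  by (induction rule: rtranclp_induct) (use assms(3) in blast)+

lemma reach_in_step:
  "x \<in> S \<Longrightarrow> y \<in> S \<Longrightarrow> E x y \<Longrightarrow> reach_in E S x y"
  unfolding reach_in_def by (rule r_into_rtranclp) simp

lemma reach_in_Times_complete:
  assumes "complete_on V E1" "complete_on W E2" "V \<times> W \<subseteq> S"
    and "(a, b) \<in> V \<times> W" "(c, d) \<in> V \<times> W"
  shows "reach_in (cart_prod_adj E1 E2) S (a, b) (c, d)"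
proof -
  let ?E = "cart_prod_adj E1 E2"
  have "reach_in ?E S (a, b) (a, d)"
  proof (cases "b = d")
    case False
    then have "E2 b d"
      using assms(2,4,5) by (auto simp: complete_on_def)
    then show ?thesis
      using assms(3-5) by (intro reach_in_step) (auto simp: cart_prod_adj_def)
  qed (simp add: reach_in_def)
  moreover have "reach_in ?E S (a, d) (c, d)"
  proof (cases "a = c")
    case False
    then have "E1 a c"
      using assms(1,4,5) by (auto simp: complete_on_def)
    then show ?thesis
      using assms(3-5) by (intro reach_in_step) (auto simp: cart_prod_adj_def)
  qed (simp add: reach_in_def)
  ultimately show ?thesis
    unfolding reach_in_def by (rule rtranclp_trans)
qed

lemma components_of_eqI:
  assumes partition: "S = \<Union>\<P>" "{} \<notin> \<P>"
    and closed: "\<And>P u v. P \<in> \<P> \<Longrightarrow> u \<in> P \<Longrightarrow> v \<in> S \<Longrightarrow> E u v \<Longrightarrow> v \<in> P"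
    and connected: "\<And>P x y. P \<in> \<P> \<Longrightarrow> x \<in> P \<Longrightarrow> y \<in> P \<Longrightarrow> reach_in E S x y"
  shows "components_of E S = \<P>"
proof -
  have component: "{y \<in> S. reach_in E S x y} = P" if "P \<in> \<P>" "x \<in> P" for P x
  proof
    show "{y \<in> S. reach_in E S x y} \<subseteq> P"
    proof
      fix y assume "y \<in> {y \<in> S. reach_in E S x y}"
      then have "reach_in E S x y" by simp
      then show "y \<in> P"
        using \<open>x \<in> P\<close> closed[OF \<open>P \<in> \<P>\<close>] by (rule reach_in_closed)
    qed
    have "P \<subseteq> S"
      using partition(1) \<open>P \<in> \<P>\<close> by blast
    then show "P \<subseteq> {y \<in> S. reach_in E S x y}"
      using connected[OF that] by blast
  qed
  show ?thesis
  proof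
    show "components_of E S \<subseteq> \<P>"
    proof
      fix C assume "C \<in> components_of E S"
      then obtain x where "x \<in> S" "C = {y \<in> S. reach_in E S x y}"
        unfolding components_of_def by blast
      moreover from \<open>x \<in> S\<close> obtain P where "P \<in> \<P>" "x \<in> P"
        using partition(1) by blast
      ultimately show "C \<in> \<P>"
        using component by simp
    qed
    show "\<P> \<subseteq> components_of E S"
    proof
      fix P assume "P \<in> \<P>"
      with partition(2) have "P \<noteq> {}" by auto
      then obtain x where "x \<in> P" by blast
      have "x \<in> S"
        using partition(1) \<open>P \<in> \<P>\<close> \<open>x \<in> P\<close> by blast
      moreover have "P = {y \<in> S. reach_in E S x y}"
        using component[OF \<open>P \<in> \<P>\<close> \<open>x \<in> P\<close>] by simp
      ultimately
      show "P \<in> components_of E S"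
        unfolding components_of_def by blast
    qed
  qed
qed

lemma card_2_adjacent:
  "card N = 2 \<Longrightarrow> \<forall>a\<in>N. \<forall>b\<in>N. a \<noteq> b \<longrightarrow> E a b \<Longrightarrow> \<exists>a b. N = {a, b} \<and> E a b"
  by (auto simp: card_2_iff)

lemma nbrs_in_insert:
  "nbrs_in E (insert a S) x = (if E x a then insert a (nbrs_in E S x) else nbrs_in E S x)"
  by (auto simp: nbrs_in_def)

lemma nbrs_in_empty: "nbrs_in E {} x = {}"
  by (simp add: nbrs_in_def)

lemma A_adj_iff:
  "A_adj u v \<longleftrightarrow> u \<noteq> v \<and>
    (u \<in> {0,1,2} \<and> v \<in> {0,1,2} \<or> u \<in> {0,3,4} \<and> v \<in> {0,3,4} \<or>
     u \<in> {1,5,6} \<and> v \<in> {1,5,6} \<or> u \<in> {2,7,8} \<and> v \<in> {2,7,8})"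
  unfolding A_adj_def A_triangles_def by auto

text \<open>The case distinction on the first coordinates lets the simplifier evaluate only one
  of the two disjuncts of the cartesian product adjacency.\<close>

lemma hive_adj_iff:
  "hive_adj (a, b) (c, d) \<longleftrightarrow> (if a = c then A_adj b d else b = d \<and> A_adj a c)"
  unfolding hive_adj_def cart_prod_adj_def A_adj_def by auto

lemma complete_on_A_triangle: "T \<in> A_triangles \<Longrightarrow> V \<subseteq> T \<Longrightarrow> complete_on V A_adj"
  unfolding complete_on_def A_adj_def by blast

lemma graph_iso_hive_fibre:
  assumes "T \<in> A_triangles" "W \<subseteq> T" "card W = n"
  shows "graph_iso ({a} \<times> W) hive_adj (K_V n) K_adj"
    and "graph_iso (W \<times> {a}) hive_adj (K_V n) K_adj"
proof -
  have "finite W"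
    using assms finite_subset unfolding A_triangles_def by auto
  have "\<not> A_adj a a"
    by (simp add: A_adj_def)
  note W_complete = complete_on_A_triangle[OF assms(1,2)]
  show "graph_iso ({a} \<times> W) hive_adj (K_V n) K_adj"
    using graph_iso_K_V[of "{a} \<times> W"] \<open>finite W\<close> assms(3)
      complete_on_singleton_Times[of A_adj a W A_adj, OF \<open>\<not> A_adj a a\<close> W_complete]
    unfolding hive_adj_def by (simp add: card_cartesian_product)
  show "graph_iso (W \<times> {a}) hive_adj (K_V n) K_adj"
    using graph_iso_K_V[of "W \<times> {a}"] \<open>finite W\<close> assms(3)
      complete_on_Times_singleton[of W A_adj A_adj a, OF W_complete \<open>\<not> A_adj a a\<close>]
    unfolding hive_adj_def by (simp add: card_cartesian_product)
qed

lemma graph_iso_hive_block: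
  assumes "T \<in> A_triangles" "T' \<in> A_triangles" "V \<subseteq> T" "W \<subseteq> T'" "card V = m" "card W = n"
  shows "graph_iso (V \<times> W) hive_adj (K_V m \<times> K_V n) (cart_prod_adj K_adj K_adj)"
proof -
  have "finite V" "finite W"
    using assms finite_subset unfolding A_triangles_def by auto
  then show ?thesis
    using graph_iso_cart_prod graph_iso_K_V complete_on_A_triangle assms
    unfolding hive_adj_def by metis
qed

definition hive_dominating_blocks :: "(nat set \<times> nat set) list" where
  "hive_dominating_blocks =
     [({0}, {7,8}), ({3,4}, {1}), ({5,6}, {2}), ({7,8}, {2}), ({1,2}, {5,6}), ({0,1,2}, {3,4})]"

definition hive_dominating_set :: "(nat \<times> nat) set" where
  "hive_dominating_set = (\<Union>(V, W)\<in>set hive_dominating_blocks. V \<times> W)"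

lemma hive_dominating_set_explicit:
  "hive_dominating_set =
     {(0,7), (0,8), (3,1), (4,1), (5,2), (6,2), (7,2), (8,2), (1,5), (1,6), (2,5), (2,6),
      (0,3), (0,4), (1,3), (1,4), (2,3), (2,4)}"
  unfolding hive_dominating_set_def hive_dominating_blocks_def by auto

lemma hive_dominating_blocks_in_triangles:
  "(V, W) \<in> set hive_dominating_blocks \<Longrightarrow>
     (\<exists>T\<in>A_triangles. V \<subseteq> T) \<and> (\<exists>T\<in>A_triangles. W \<subseteq> T)"
  unfolding hive_dominating_blocks_def A_triangles_def by auto

lemma components_of_hive_dominating_set:
  "components_of hive_adj hive_dominating_set = (\<lambda>(V, W). V \<times> W) ` set hive_dominating_blocks"
    (is "_ = ?\<C>")
proof (rule components_of_eqI)
  show "hive_dominating_set = \<Union> ?\<C>"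
    unfolding hive_dominating_set_def by simp
  show "{} \<notin> ?\<C>"
    unfolding hive_dominating_blocks_def by auto
next
  have "\<forall>P\<in>?\<C>. \<forall>u\<in>P. \<forall>v\<in>hive_dominating_set. hive_adj u v \<longrightarrow> v \<in> P"
    unfolding hive_dominating_set_explicit hive_dominating_blocks_def
    apply (simp only: list.set image_insert image_empty prod.case ball_simps split_paired_Ball_Sigma)
    by (simp add: hive_adj_iff A_adj_iff)
  then show "v \<in> P"
    if "P \<in> ?\<C>" "u \<in> P" "v \<in> hive_dominating_set" "hive_adj u v" for P u v
    using that by blast
next
  fix P x y
  assume "P \<in> ?\<C>" "x \<in> P" "y \<in> P"
  then obtain V W where VW: "(V, W) \<in> set hive_dominating_blocks" "P = V \<times> W" by auto
  then obtain T T' where "T \<in> A_triangles" "T' \<in> A_triangles" "V \<subseteq> T" "W \<subseteq> T'"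
    using hive_dominating_blocks_in_triangles by blast
  moreover have "V \<times> W \<subseteq> hive_dominating_set"
    using VW(1) unfolding hive_dominating_set_def by blast
  ultimately show "reach_in hive_adj hive_dominating_set x y"
    using \<open>x \<in> P\<close> \<open>y \<in> P\<close> VW(2) reach_in_Times_complete complete_on_A_triangle
    unfolding hive_adj_def by (metis prod.collapse)
qed

lemma distinct_hive_dominating_components:
  "distinct (map (\<lambda>(V, W). V \<times> W) hive_dominating_blocks)"
proof -
  txt \<open>Each block contains exactly one of the following six vertices.\<close>
  have "distinct (map (\<lambda>C. C \<inter> {(0,7), (3,1), (5,2), (7,2), (1,5), (0,3)})
      (map (\<lambda>(V, W). V \<times> W) hive_dominating_blocks))"
    by (simp add: hive_dominating_blocks_def)
  then show ?thesis
    by (simp only: distinct_map)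
qed

lemma hive_dominating_set_perfect:
  "\<forall>x\<in>hive_V. x \<notin> hive_dominating_set \<longrightarrow>
     card (nbrs_in hive_adj hive_dominating_set x) = 1 \<or>
     card (nbrs_in hive_adj hive_dominating_set x) = 2 \<and>
       (\<forall>a\<in>nbrs_in hive_adj hive_dominating_set x.
          \<forall>b\<in>nbrs_in hive_adj hive_dominating_set x. a \<noteq> b \<longrightarrow> hive_adj a b)"
proof -
  have A_V: "A_V = {0,1,2,3,4,5,6,7,8}"
    unfolding A_V_def by auto
  txt \<open>Unfolding the quantifiers before simplification means that the simplifier only ever
    meets concrete vertices; otherwise it case-splits on symbolic adjacency tests.\<close>
  show ?thesis
    unfolding hive_V_def A_V hive_dominating_set_explicit split_paired_Ball_Sigma ball_simps
    by (simp add: nbrs_in_insert nbrs_in_empty hive_adj_iff A_adj_iff)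
qed

lemma nonisolated_perfect_dominating_hive_dominating_set:
  "nonisolated_perfect_dominating hive_V hive_adj hive_dominating_set"
  unfolding nonisolated_perfect_dominating_def
proof (intro conjI ballI)
  show "hive_dominating_set \<subseteq> hive_V"
    unfolding hive_dominating_set_explicit hive_V_def A_V_def by simp
next
  fix x assume "x \<in> hive_dominating_set"
  then show "\<exists>y\<in>hive_dominating_set. hive_adj x y"
    unfolding hive_dominating_set_explicit by (auto simp: hive_adj_iff A_adj_iff)
next
  fix x assume "x \<in> hive_V - hive_dominating_set"
  then have "card (nbrs_in hive_adj hive_dominating_set x) = 1 \<or>
     card (nbrs_in hive_adj hive_dominating_set x) = 2 \<and>
       (\<forall>a\<in>nbrs_in hive_adj hive_dominating_set x.
          \<forall>b\<in>nbrs_in hive_adj hive_dominating_set x. a \<noteq> b \<longrightarrow> hive_adj a b)"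
    using hive_dominating_set_perfect by blast
  then show "card (nbrs_in hive_adj hive_dominating_set x) = 1 \<or>
     card (nbrs_in hive_adj hive_dominating_set x) = 2 \<and>
       (\<exists>a b. nbrs_in hive_adj hive_dominating_set x = {a, b} \<and> hive_adj a b)"
    using card_2_adjacent by blast
qed

theorem theorem4p1:
  shows "\<exists>S. nonisolated_perfect_dominating hive_V hive_adj S \<and>
     (\<exists>C1 C2 C3 C4 C5 C6.
        components_of hive_adj S = {C1, C2, C3, C4, C5, C6} \<and>
        distinct [C1, C2, C3, C4, C5, C6] \<and>
        graph_iso C1 hive_adj (K_V 2) K_adj \<and>
        graph_iso C2 hive_adj (K_V 2) K_adj \<and>
        graph_iso C3 hive_adj (K_V 2) K_adj \<and>
        graph_iso C4 hive_adj (K_V 2) K_adj \<and>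
        graph_iso C5 hive_adj (K_V 2 \<times> K_V 2) (cart_prod_adj K_adj K_adj) \<and>
        graph_iso C6 hive_adj (K_V 3 \<times> K_V 2) (cart_prod_adj K_adj K_adj))"
proof -
  have "components_of hive_adj hive_dominating_set =
      {{0} \<times> {7,8}, {3,4} \<times> {1}, {5,6} \<times> {2}, {7,8} \<times> {2}, {1,2} \<times> {5,6}, {0,1,2} \<times> {3,4}}"
    using components_of_hive_dominating_set by (simp add: hive_dominating_blocks_def)
  moreover have "distinct [{0} \<times> {7,8}, {3,4} \<times> {1}, {5,6} \<times> {2}, {7,8} \<times> {2},
      {1,2} \<times> {5,6}, {0,1::nat,2} \<times> {3::nat,4}]"
    using distinct_hive_dominating_components by (simp add: hive_dominating_blocks_def)
  moreover have "graph_iso ({0} \<times> {7,8}) hive_adj (K_V 2) K_adj"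
    by (rule graph_iso_hive_fibre(1)[of "{2,7,8}" "{7,8}"]) (simp_all add: A_triangles_def)
  moreover have "graph_iso ({3,4} \<times> {1}) hive_adj (K_V 2) K_adj"
    by (rule graph_iso_hive_fibre(2)[of "{0,3,4}" "{3,4}"]) (simp_all add: A_triangles_def)
  moreover have "graph_iso ({5,6} \<times> {2}) hive_adj (K_V 2) K_adj"
    by (rule graph_iso_hive_fibre(2)[of "{1,5,6}" "{5,6}"]) (simp_all add: A_triangles_def)
  moreover have "graph_iso ({7,8} \<times> {2}) hive_adj (K_V 2) K_adj"
    by (rule graph_iso_hive_fibre(2)[of "{2,7,8}" "{7,8}"]) (simp_all add: A_triangles_def)
  moreover have
    "graph_iso ({1,2} \<times> {5,6}) hive_adj (K_V 2 \<times> K_V 2) (cart_prod_adj K_adj K_adj)"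
    by (rule graph_iso_hive_block[of "{0,1,2}" "{1,5,6}" "{1,2}" "{5,6}"])
      (simp_all add: A_triangles_def)
  moreover have
    "graph_iso ({0,1,2} \<times> {3,4}) hive_adj (K_V 3 \<times> K_V 2) (cart_prod_adj K_adj K_adj)"
    by (rule graph_iso_hive_block[of "{0,1,2}" "{0,3,4}" "{0,1,2}" "{3,4}"])
      (simp_all add: A_triangles_def)
  ultimately show ?thesis
    by (intro exI conjI) (rule nonisolated_perfect_dominating_hive_dominating_set | assumption)+
qed

end
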